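(* Let $n\ge 1$ and let $X=\mathrm{P}_n$ be the path graph on $n$ vertices. Then $|\mathrm{Fix}(\mathbf{F}^\uparrow)|=2F_{3n-1}$, where $F_m$ is the $m$-th Fibonacci number ($F_0=0$, $F_1=1$, $F_m=F_{m-1}+F_{m-2}$).
   Context: For a finite simple graph $X$ with vertices $1,\dots,n$, $d(v)$ is the degree of $v$ and $n[v]$ the closed neighborhood of $v$. An extended vertex state is $s_v=(x_v,k_v)\in\{0,1\}\times\{1,\dots,d(v)+1\}$; $\mathcal{S}$ is the product of these sets. Let $\sigma(x[v])=|\{u\in n[v]:x_u=1\}|$. The increasing vertex function maps $(x_v,k_v)$ to $(x_v',k_v')$ with $x_v'=1$ iff $\sigma(x[v])\ge k_v$ (else $0$), and $k_v'=k_v+1$ if $x_v=0$ and $\sigma(x[v])\ge k_v$, else $k_v'=k_v$. $\mathbf{F}^\uparrow:\mathcal{S}\to\mathcal{S}$ applies this vertex function at all vertices simultaneously, and $\mathrm{Fix}(\mathbf{F}^\uparrow)$ is its set of fixed points (equivalently: states with, for every $v$, either $x_v=0$ and $\sigma(x[v])<k_v$, or $x_v=1$ and $\sigma(x[v])\ge k_v$). *)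

theory Defs
  imports Main "HOL-Library.FuncSet" "HOL-Number_Theory.Fib"
begin

definition nbrs :: "'a set \<Rightarrow> ('a \<Rightarrow> 'a \<Rightarrow> bool) \<Rightarrow> 'a \<Rightarrow> 'a set" where
  "nbrs V E v = {u \<in> V. E v u}"

definition deg :: "'a set \<Rightarrow> ('a \<Rightarrow> 'a \<Rightarrow> bool) \<Rightarrow> 'a \<Rightarrow> nat" where
  "deg V E v = card (nbrs V E v)"

definition closed_nbhd :: "'a set \<Rightarrow> ('a \<Rightarrow> 'a \<Rightarrow> bool) \<Rightarrow> 'a \<Rightarrow> 'a set" where
  "closed_nbhd V E v = insert v (nbrs V E v)"

definition states :: "'a set \<Rightarrow> ('a \<Rightarrow> 'a \<Rightarrow> bool) \<Rightarrow> ('a \<Rightarrow> nat \<times> nat) set" where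
  "states V E = (\<Pi>\<^sub>E v\<in>V. {0,1} \<times> {1..deg V E v + 1})"

definition sigma :: "'a set \<Rightarrow> ('a \<Rightarrow> 'a \<Rightarrow> bool) \<Rightarrow> ('a \<Rightarrow> nat \<times> nat) \<Rightarrow> 'a \<Rightarrow> nat" where
  "sigma V E s v = card {u \<in> closed_nbhd V E v. fst (s u) = 1}"

definition inc_vertex_fun :: "'a set \<Rightarrow> ('a \<Rightarrow> 'a \<Rightarrow> bool) \<Rightarrow> ('a \<Rightarrow> nat \<times> nat) \<Rightarrow> 'a \<Rightarrow> nat \<times> nat" where
  "inc_vertex_fun V E s v =
     (let x = fst (s v); k = snd (s v); sg = sigma V E s v in
       ((if sg \<ge> k then 1 else 0),
        (if x = 0 \<and> sg \<ge> k then k + 1 else k)))"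

definition F_up :: "'a set \<Rightarrow> ('a \<Rightarrow> 'a \<Rightarrow> bool) \<Rightarrow> ('a \<Rightarrow> nat \<times> nat) \<Rightarrow> ('a \<Rightarrow> nat \<times> nat)" where
  "F_up V E s = (\<lambda>v. if v \<in> V then inc_vertex_fun V E s v else undefined)"

definition Fix_F_up :: "'a set \<Rightarrow> ('a \<Rightarrow> 'a \<Rightarrow> bool) \<Rightarrow> ('a \<Rightarrow> nat \<times> nat) set" where
  "Fix_F_up V E = {s \<in> states V E. F_up V E s = s}"

definition path_V :: "nat \<Rightarrow> nat set" where "path_V n = {1..n}"
definition path_E :: "nat \<Rightarrow> nat \<Rightarrow> bool" where "path_E u v = (u = v + 1 \<or> v = u + 1)"

end

theory Submission
  imports Defs
begin

text \<open>A state is fixed iff every vertex satisfies \<open>x_v = [k_v \<le> \<sigma>(x[v])]\<close>, and on a path this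
  condition only involves a vertex and its two neighbours. Once the activities \<open>x\<close> are chosen,
  a vertex with \<open>x_v = 1\<close> admits \<open>\<sigma>(x[v])\<close> thresholds and one with \<open>x_v = 0\<close> admits
  \<open>d(v) + 1 - \<sigma>(x[v])\<close>. Scanning the path from left to right gives a transfer-matrix recursion:
  the number of fixed continuations of length \<open>m + 1\<close> starting with activity \<open>x\<close> next to a
  neighbour of activity \<open>a\<close> is \<open>F(3m + 3)\<close> if \<open>a = x\<close> and \<open>F(3m + 2)\<close> otherwise, by
  \<open>F(j + 3) = 2F(j + 1) + F(j)\<close> and \<open>F(j + 4) = 3F(j + 1) + 2F(j)\<close>. At the left end of the path
  there is no neighbour and both activities occur, giving \<open>2F(3n - 1)\<close>.\<close>

lemma inc_vertex_fun_fixed_iff: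
  "inc_vertex_fun V E s v = s v \<longleftrightarrow> fst (s v) = (if snd (s v) \<le> sigma V E s v then 1 else 0)"
  by (cases "s v") (auto simp: inc_vertex_fun_def Let_def)

lemma Fix_F_up_iff:
  "s \<in> Fix_F_up V E \<longleftrightarrow> s \<in> extensional V \<and>
     (\<forall>v\<in>V. snd (s v) \<in> {1..deg V E v + 1} \<and> fst (s v) = (if snd (s v) \<le> sigma V E s v then 1 else 0))"
proof -
  have "F_up V E s = s \<longleftrightarrow> (\<forall>v\<in>V. inc_vertex_fun V E s v = s v)" if "s \<in> extensional V"
    using that unfolding F_up_def fun_eq_iff by (metis extensional_arb)
  then show ?thesis
    unfolding Fix_F_up_def states_def PiE_iff inc_vertex_fun_fixed_iff
    by (auto simp: mem_Times_iff)
qed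

text \<open>A vertex of a path is seen through the activities of its left and right neighbours,
  \<open>None\<close> standing for a missing neighbour at an end of the path. A list of states of consecutive
  vertices is a \<open>fixed_chain p\<close> if the vertex before its head has activity \<open>p\<close> and the list ends
  at the right end of the path.\<close>

definition present_nbrs :: "nat option \<Rightarrow> nat option \<Rightarrow> nat" where
  "present_nbrs p q = (if p = None then 0 else 1) + (if q = None then 0 else 1)"

definition active_count :: "nat option \<Rightarrow> nat \<Rightarrow> nat option \<Rightarrow> nat" where
  "active_count p x q = (if x = 1 then 1 else 0) + (if p = Some 1 then 1 else 0) + (if q = Some 1 then 1 else 0)"

definition locally_fixed :: "nat option \<Rightarrow> nat \<times> nat \<Rightarrow> nat option \<Rightarrow> bool" where
  "locally_fixed p a q \<longleftrightarrow>
     snd a \<in> {1..present_nbrs p q + 1} \<and> fst a = (if snd a \<le> active_count p (fst a) q then 1 else 0)"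

fun fixed_chain :: "nat option \<Rightarrow> (nat \<times> nat) list \<Rightarrow> bool" where
  "fixed_chain p [] = True"
| "fixed_chain p [a] = locally_fixed p a None"
| "fixed_chain p (a # b # r) = (locally_fixed p a (Some (fst b)) \<and> fixed_chain (Some (fst a)) (b # r))"

definition fixed_chains :: "nat option \<Rightarrow> nat \<Rightarrow> nat \<Rightarrow> (nat \<times> nat) list set" where
  "fixed_chains p x m = {xs. length xs = Suc m \<and> fst (hd xs) = x \<and> fixed_chain p xs}"

definition thresholds :: "nat option \<Rightarrow> nat \<Rightarrow> nat option \<Rightarrow> nat set" where
  "thresholds p x q = {k. locally_fixed p (x, k) q}"

lemma finite_thresholds: "finite (thresholds p x q)"
  by (rule finite_subset[of _ "{1..present_nbrs p q + 1}"]) (auto simp: thresholds_def locally_fixed_def)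

lemma card_thresholds:
  assumes "x \<in> {0,1}"
  shows "card (thresholds p x q) =
    (if x = 1 then active_count p x q else present_nbrs p q + 1 - active_count p x q)"
proof -
  have "active_count p x q \<le> present_nbrs p q + (if x = 1 then 1 else 0)"
    by (auto simp: active_count_def present_nbrs_def)
  then have "thresholds p x q =
      (if x = 1 then {1..active_count p x q} else {active_count p x q + 1..present_nbrs p q + 1})"
    using assms by (auto simp: thresholds_def locally_fixed_def)
  then show ?thesis by simp
qed

lemma fixed_chain_Cons_activity: "fixed_chain p (a # r) \<Longrightarrow> fst a \<in> {0,1}"
  by (cases r) (auto simp: locally_fixed_def split: if_splits)

lemma fixed_chains_0: "fixed_chains p x 0 = (\<lambda>k. [(x, k)]) ` thresholds p x None"
  by (auto simp: fixed_chains_def thresholds_def length_Suc_conv)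

lemma fixed_chains_Suc:
  "fixed_chains p x (Suc m) =
     (\<Union>y\<in>{0,1}. (\<lambda>(k, ys). (x, k) # ys) ` (thresholds p x (Some y) \<times> fixed_chains (Some x) y m))"
  (is "?L = ?R")
proof
  show "?L \<subseteq> ?R"
  proof
    fix xs assume "xs \<in> ?L"
    then obtain k b r where xs: "xs = (x, k) # b # r" and "length r = m"
      and chain: "fixed_chain p ((x, k) # b # r)"
      unfolding fixed_chains_def by (auto simp: length_Suc_conv)
    moreover have "fst b \<in> {0,1}"
      using chain fixed_chain_Cons_activity[of "Some x" b r] by simp
    ultimately show "xs \<in> ?R"
      by (auto simp: thresholds_def fixed_chains_def intro!: bexI[of _ "fst b"])
  qed
  show "?R \<subseteq> ?L"
    by (auto simp: fixed_chains_def thresholds_def length_Suc_conv)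
qed

lemma finite_fixed_chains: "finite (fixed_chains p x m)"
  by (induction m arbitrary: p x) (simp_all add: fixed_chains_0 fixed_chains_Suc finite_thresholds)

lemma card_fixed_chains_0: "card (fixed_chains p x 0) = card (thresholds p x None)"
  by (simp add: fixed_chains_0 card_image inj_on_def)

lemma card_fixed_chains_Suc:
  "card (fixed_chains p x (Suc m)) =
     (\<Sum>y\<in>{0,1}. card (thresholds p x (Some y)) * card (fixed_chains (Some x) y m))"
proof -
  have "card (fixed_chains p x (Suc m)) =
      (\<Sum>y\<in>{0,1}. card ((\<lambda>(k, ys). (x, k) # ys) ` (thresholds p x (Some y) \<times> fixed_chains (Some x) y m)))"
    unfolding fixed_chains_Suc
    by (rule card_UN_disjoint) (auto simp: finite_thresholds finite_fixed_chains, auto simp: fixed_chains_def)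
  also have "\<dots> = (\<Sum>y\<in>{0,1}. card (thresholds p x (Some y) \<times> fixed_chains (Some x) y m))"
    by (intro sum.cong refl card_image) (auto simp: inj_on_def)
  finally show ?thesis by (simp add: card_cartesian_product)
qed

lemma fib_add_3: "fib (n + 3) = 2 * fib (n + 1) + fib n"
  by (simp add: eval_nat_numeral)

lemma fib_add_4: "fib (n + 4) = 3 * fib (n + 1) + 2 * fib n"
  by (simp add: eval_nat_numeral)

lemma card_fixed_chains_Some:
  assumes "a \<in> {0,1}" "x \<in> {0,1}"
  shows "card (fixed_chains (Some a) x m) = (if a = x then fib (3 * m + 3) else fib (3 * m + 2))"
  using assms
proof (induction m arbitrary: a x)
  case 0
  then show ?case
    by (auto simp: card_fixed_chains_0 card_thresholds active_count_def present_nbrs_def numeral_3_eq_3)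
next
  case (Suc m)
  define n where "n = 3 * m + 2"
  have n: "3 * Suc m + 3 = n + 4" "3 * Suc m + 2 = n + 3" "3 * m + 3 = n + 1" "3 * m + 2 = n"
    by (simp_all add: n_def)
  have "card (fixed_chains (Some a) x m) = (if a = x then fib (n + 1) else fib n)"
    if "a \<in> {0,1}" "x \<in> {0,1}" for a x
    using Suc.IH[OF that] unfolding n .
  then show ?case
    using Suc.prems unfolding n
    by (auto simp: card_fixed_chains_Suc card_thresholds active_count_def present_nbrs_def
        fib_add_3 fib_add_4 simp del: fib.simps)
qed

lemma card_fixed_chains_None:
  assumes "x \<in> {0,1}"
  shows "card (fixed_chains None x m) = fib (3 * m + 2)"
proof (cases m)
  case 0
  then show ?thesis
    using assms by (auto simp: card_fixed_chains_0 card_thresholds active_count_def present_nbrs_def)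
next
  case (Suc m')
  define n where "n = 3 * m' + 2"
  have n: "3 * Suc m' + 2 = n + 3" "3 * m' + 3 = n + 1" "3 * m' + 2 = n"
    by (simp_all add: n_def)
  have "card (fixed_chains (Some a) x m') = (if a = x then fib (n + 1) else fib n)"
    if "a \<in> {0,1}" "x \<in> {0,1}" for a x
    using card_fixed_chains_Some[OF that, of m'] unfolding n .
  then show ?thesis
    using assms unfolding Suc n(1)
    by (auto simp: card_fixed_chains_Suc card_thresholds active_count_def present_nbrs_def
        fib_add_3 simp del: fib.simps)
qed

lemma card_fixed_chain_lists:
  "card {xs. length xs = Suc m \<and> fixed_chain None xs} = 2 * fib (3 * m + 2)"
proof -
  have "{xs. length xs = Suc m \<and> fixed_chain None xs} = fixed_chains None 0 m \<union> fixed_chains None 1 m"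
    by (auto simp: fixed_chains_def length_Suc_conv dest: fixed_chain_Cons_activity)
  moreover have "fixed_chains None 0 m \<inter> fixed_chains None 1 m = {}"
    by (auto simp: fixed_chains_def)
  ultimately show ?thesis
    by (simp add: card_Un_disjoint finite_fixed_chains card_fixed_chains_None)
qed

definition left_activity :: "(nat \<Rightarrow> nat \<times> nat) \<Rightarrow> nat \<Rightarrow> nat option" where
  "left_activity s v = (if v = 1 then None else Some (fst (s (v - 1))))"

definition right_activity :: "nat \<Rightarrow> (nat \<Rightarrow> nat \<times> nat) \<Rightarrow> nat \<Rightarrow> nat option" where
  "right_activity n s v = (if v < n then Some (fst (s (Suc v))) else None)"

lemma nbrs_path:
  "v \<in> path_V n \<Longrightarrow>
     nbrs (path_V n) path_E v = (if v = 1 then {} else {v - 1}) \<union> (if v < n then {Suc v} else {})"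
  by (auto simp: nbrs_def path_V_def path_E_def)

lemma deg_path:
  "v \<in> path_V n \<Longrightarrow> deg (path_V n) path_E v = present_nbrs (left_activity s v) (right_activity n s v)"
  by (auto simp: deg_def nbrs_path present_nbrs_def left_activity_def right_activity_def)

lemma closed_nbhd_path:
  assumes "v \<in> path_V n"
  shows "closed_nbhd (path_V n) path_E v =
    insert v ((if v = 1 then {} else {v - 1}) \<union> (if v < n then {Suc v} else {}))"
  using assms by (auto simp: closed_nbhd_def nbrs_path)

lemma sigma_path:
  assumes "v \<in> path_V n"
  shows "sigma (path_V n) path_E s v = active_count (left_activity s v) (fst (s v)) (right_activity n s v)"
proof -
  have "1 \<le> v" using assms by (simp add: path_V_def)
  have "sigma (path_V n) path_E s v = (\<Sum>u\<in>closed_nbhd (path_V n) path_E v. if fst (s u) = 1 then 1 else 0)"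
    unfolding sigma_def closed_nbhd_path[OF assms] by (simp add: sum.If_cases Int_def)
  then show ?thesis
    using \<open>1 \<le> v\<close> unfolding closed_nbhd_path[OF assms] active_count_def left_activity_def right_activity_def
    by (cases "v = 1"; cases "v < n") simp_all
qed

lemma Fix_F_up_path_iff:
  "s \<in> Fix_F_up (path_V n) path_E \<longleftrightarrow>
     s \<in> extensional {1..n} \<and> (\<forall>v\<in>{1..n}. locally_fixed (left_activity s v) (s v) (right_activity n s v))"
proof -
  have "s \<in> Fix_F_up (path_V n) path_E \<longleftrightarrow>
      s \<in> extensional (path_V n) \<and> (\<forall>v\<in>path_V n. locally_fixed (left_activity s v) (s v) (right_activity n s v))"
    unfolding Fix_F_up_iff locally_fixed_def
    by (intro conj_cong refl ball_cong) (simp_all add: deg_path[where s = s] sigma_path)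
  then show ?thesis unfolding path_V_def .
qed

lemma fixed_chain_iff_nth:
  "fixed_chain p xs \<longleftrightarrow>
     (\<forall>i<length xs. locally_fixed (if i = 0 then p else Some (fst (xs ! (i - 1)))) (xs ! i)
        (if Suc i < length xs then Some (fst (xs ! Suc i)) else None))"
proof (induction p xs rule: fixed_chain.induct)
  case (3 p a b r)
  show ?case
    unfolding fixed_chain.simps 3 length_Cons All_less_Suc2 by (simp add: nth_Cons')
qed auto

lemma fixed_chain_map_upt:
  "fixed_chain None (map s [1..<Suc n]) \<longleftrightarrow>
     (\<forall>v\<in>{1..n}. locally_fixed (left_activity s v) (s v) (right_activity n s v))"
proof -
  have "fixed_chain None (map s [1..<Suc n]) \<longleftrightarrow>
      (\<forall>i<n. locally_fixed (left_activity s (Suc i)) (s (Suc i)) (right_activity n s (Suc i)))"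
    unfolding fixed_chain_iff_nth
    by (simp add: nth_map_upt left_activity_def right_activity_def cong: if_cong del: upt_Suc)
  also have "\<dots> \<longleftrightarrow> (\<forall>v\<in>{1..n}. locally_fixed (left_activity s v) (s v) (right_activity n s v))"
    unfolding image_Suc_lessThan[symmetric] by auto
  finally show ?thesis .
qed

lemma card_extensional_by_lists:
  fixes P :: "'a list \<Rightarrow> bool"
  shows "card {s \<in> extensional {1..n}. P (map s [1..<Suc n])} = card {xs. length xs = n \<and> P xs}"
proof -
  let ?f = "\<lambda>s. map s [1..<Suc n]"
  have inj: "inj_on ?f {s \<in> extensional {1..n}. P (?f s)}"
  proof (rule inj_onI)
    fix s t assume "s \<in> {s \<in> extensional {1..n}. P (?f s)}" "t \<in> {s \<in> extensional {1..n}. P (?f s)}"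
      and eq: "?f s = ?f t"
    then have "s \<in> extensional {1..n}" "t \<in> extensional {1..n}" by simp_all
    then show "s = t"
    proof (rule extensionalityI)
      fix v assume "v \<in> {1..n}"
      then have "v \<in> set [1..<Suc n]" by (simp only: set_upt atLeastLessThanSuc_atLeastAtMost)
      with eq show "s v = t v" by (simp only: map_eq_conv)
    qed
  qed
  have img: "?f ` {s \<in> extensional {1..n}. P (?f s)} = {xs. length xs = n \<and> P xs}"
  proof (intro equalityI subsetI)
    fix xs assume xs: "xs \<in> {xs. length xs = n \<and> P xs}"
    define s where "s v = (if v \<in> {1..n} then xs ! (v - 1) else undefined)" for v
    have "?f s = xs"
      using xs by (intro nth_equalityI) (simp_all add: s_def nth_map_upt del: upt_Suc)
    moreover have "s \<in> extensional {1..n}" by (simp add: s_def extensional_def)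
    ultimately show "xs \<in> ?f ` {s \<in> extensional {1..n}. P (?f s)}"
      using xs by force
  qed auto
  show ?thesis
    using card_image[OF inj] unfolding img by (rule sym)
qed

theorem proposition4p3:
  fixes n :: nat
  assumes "n \<ge> 1"
  shows "card (Fix_F_up (path_V n) path_E) = 2 * fib (3 * n - 1)"
proof -
  obtain m where n: "n = Suc m" using assms by (cases n) auto
  have "Fix_F_up (path_V n) path_E = {s \<in> extensional {1..n}. fixed_chain None (map s [1..<Suc n])}"
    unfolding set_eq_iff mem_Collect_eq Fix_F_up_path_iff fixed_chain_map_upt by blast
  then have "card (Fix_F_up (path_V n) path_E) = card {xs. length xs = n \<and> fixed_chain None xs}"
    by (simp only: card_extensional_by_lists)
  also have "\<dots> = 2 * fib (3 * n - 1)"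
    using card_fixed_chain_lists[of m] n by simp
  finally show ?thesis .
qed

end
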